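(* Let $\mathfrak{g}$ be a finite-dimensional real Lie algebra, fix a sign $\pm$, and let $\mathbf{M}_{\pm}(q,p) = \mp\operatorname{ad}_q^{*}p$ for $(q,p)\in T^{*}\mathfrak{g}=\mathfrak{g}\times\mathfrak{g}^{*}$. Let $f\colon\mathfrak{g}^{*}\to\mathbb{R}$ be a Casimir of the $(\pm)$-Lie--Poisson bracket $\{f_1,f_2\}_{\pm}(\mu) = \pm\langle\mu,[Df_1(\mu),Df_2(\mu)]\rangle$, define $F := f\circ\mathbf{M}_{\pm}$ and $\gamma\colon T^{*}\mathfrak{g}\to\mathfrak{g}$, $\gamma(q,p) := Df(\mathbf{M}_{\pm}(q,p))$, and consider the $\mathbb{R}$ (Lie algebra) action on $T^{*}\mathfrak{g}$ given by the vector fields $$s_{T^{*}\mathfrak{g}}(q,p) := \big(\pm\operatorname{ad}_{s\gamma(q,p)}q,\ \mp\operatorname{ad}^{*}_{s\gamma(q,p)}p\big),\qquad s\in\mathbb{R}.$$ Then $F$ is the momentum map of this action (i.e. $X_{sF} = s_{T^{*}\mathfrak{g}}$ for all $s$, with $X$ the Hamiltonian vector field for the canonical symplectic structure). Moreover, for any smooth $h\colon\mathfrak{g}^{*}\to\mathbb{R}$, the Hamiltonian $H := h\circ\mathbf{M}_{\pm}$ is infinitesimally invariant under this action, and $F$ is an invariant of the canonical Hamiltonian system $\dot q=\partial H/\partial p$, $\dot p=-\partial H/\partial q$.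
   Context: $\operatorname{ad}_{x}y=[x,y]$, $\operatorname{ad}_{x}^{*}$ is its dual: $\langle \operatorname{ad}_{x}^{*}\alpha, y\rangle = \langle \alpha,[x,y]\rangle$. For smooth $f\colon\mathfrak{g}^{*}\to\mathbb{R}$, $Df(\mu)\in\mathfrak{g}$ is defined by $\langle\delta\mu, Df(\mu)\rangle = \frac{d}{ds}\big|_{s=0}f(\mu+s\delta\mu)$. A Casimir of a Poisson bracket is a function whose bracket with every function vanishes. $T^{*}\mathfrak{g}$ carries the canonical symplectic structure, with Hamiltonian vector field $X_F = (\partial F/\partial p, -\partial F/\partial q)$. *)

theory Defs
  imports "HOL-Analysis.Analysis"
begin

text \<open>The dual space is identified
  with the same space via the inner product, i.e. the pairing is the inner product.\<close>

definition lie_algebra :: "('a::euclidean_space \<Rightarrow> 'a \<Rightarrow> 'a) \<Rightarrow> bool" where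
  "lie_algebra B \<longleftrightarrow> bilinear B \<and> (\<forall>x y. B x y = - B y x) \<and>
     (\<forall>x y z. B x (B y z) + B y (B z x) + B z (B x y) = 0)"

definition ad_star :: "('a::euclidean_space \<Rightarrow> 'a \<Rightarrow> 'a) \<Rightarrow> 'a \<Rightarrow> 'a \<Rightarrow> 'a" where
  "ad_star B x = adjoint (B x)"

definition Dfun :: "('a::euclidean_space \<Rightarrow> real) \<Rightarrow> 'a \<Rightarrow> 'a" where
  "Dfun f mu = (THE v. (f has_derivative (\<lambda>d. d \<bullet> v)) (at mu))"

text \<open>(+/-)-Lie--Poisson bracket, sign sg = 1 or -1.\<close>
definition lie_poisson :: "real \<Rightarrow> ('a::euclidean_space \<Rightarrow> 'a \<Rightarrow> 'a) \<Rightarrow>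
    ('a \<Rightarrow> real) \<Rightarrow> ('a \<Rightarrow> real) \<Rightarrow> 'a \<Rightarrow> real" where
  "lie_poisson sg B f1 f2 mu = sg * (mu \<bullet> B (Dfun f1 mu) (Dfun f2 mu))"

definition casimir :: "real \<Rightarrow> ('a::euclidean_space \<Rightarrow> 'a \<Rightarrow> 'a) \<Rightarrow> ('a \<Rightarrow> real) \<Rightarrow> bool" where
  "casimir sg B f \<longleftrightarrow> (\<forall>k. (\<forall>mu. k differentiable (at mu)) \<longrightarrow>
      (\<forall>mu. lie_poisson sg B f k mu = 0))"

definition momentum :: "real \<Rightarrow> ('a::euclidean_space \<Rightarrow> 'a \<Rightarrow> 'a) \<Rightarrow> 'a \<times> 'a \<Rightarrow> 'a" where
  "momentum sg B z = (- sg) *\<^sub>R ad_star B (fst z) (snd z)"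

definition gam :: "real \<Rightarrow> ('a::euclidean_space \<Rightarrow> 'a \<Rightarrow> 'a) \<Rightarrow> ('a \<Rightarrow> real) \<Rightarrow> 'a \<times> 'a \<Rightarrow> 'a" where
  "gam sg B f z = Dfun f (momentum sg B z)"

definition act_vf :: "real \<Rightarrow> ('a::euclidean_space \<Rightarrow> 'a \<Rightarrow> 'a) \<Rightarrow> ('a \<Rightarrow> real) \<Rightarrow> real \<Rightarrow>
    'a \<times> 'a \<Rightarrow> 'a \<times> 'a" where
  "act_vf sg B f s z = (sg *\<^sub>R B (s *\<^sub>R gam sg B f z) (fst z),
                        (- sg) *\<^sub>R ad_star B (s *\<^sub>R gam sg B f z) (snd z))"

definition ham_vf :: "('a::euclidean_space \<times> 'a \<Rightarrow> real) \<Rightarrow> 'a \<times> 'a \<Rightarrow> 'a \<times> 'a" where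
  "ham_vf G z = (Dfun (\<lambda>p'. G (fst z, p')) (snd z), - Dfun (\<lambda>q'. G (q', snd z)) (fst z))"

end

theory Submission
  imports Defs
begin

text \<open>The partial gradients of a collective function \<open>g \<circ> M\<close> at \<open>(q, p)\<close> are
  \<open>\<plusminus>ad*\<^bsub>Dg\<^esub> p\<close> and \<open>\<minusplus>[q, Dg]\<close>, so its Hamiltonian vector field is
  \<open>(\<plusminus>ad\<^bsub>Dg\<^esub> q, \<minusplus>ad*\<^bsub>Dg\<^esub> p)\<close>; for \<open>g = s f\<close> this is the generator of the action.
  Pairing two such gradients and applying the Jacobi identity once shows that \<open>M\<close> is a Poisson
  map: \<open>d(g \<circ> M)(X\<^bsub>k \<circ> M\<^esub>) = {g, k}\<^sub>\<plusminus> \<circ> M\<close>.  Hence both the invariance of \<open>H\<close> under the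
  action and the conservation of \<open>F\<close> along the flow of \<open>H\<close> reduce to \<open>{f, h}\<^sub>\<plusminus> = 0\<close>.\<close>

lemma Dfun_eqI:
  fixes g :: "'a::euclidean_space \<Rightarrow> real"
  assumes "(g has_derivative (\<lambda>d. d \<bullet> v)) (at x)"
  shows "Dfun g x = v"
  unfolding Dfun_def
proof (rule the_equality)
  fix w assume "(g has_derivative (\<lambda>d. d \<bullet> w)) (at x)"
  then have "(\<lambda>d. d \<bullet> w) = (\<lambda>d. d \<bullet> v)"
    using assms has_derivative_unique by blast
  then show "w = v"
    by (metis vector_eq_ldot)
qed (rule assms)

lemma has_derivative_Dfun:
  fixes g :: "'a::euclidean_space \<Rightarrow> real"
  assumes "g differentiable (at x)"
  shows "(g has_derivative (\<lambda>d. d \<bullet> Dfun g x)) (at x)"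
proof -
  obtain g' where g': "(g has_derivative g') (at x)"
    using assms differentiable_def by blast
  have "g' = (\<lambda>d. d \<bullet> adjoint g' 1)"
    using adjoint_works[OF has_derivative_linear[OF g'], of _ 1] by (auto simp: fun_eq_iff)
  with g' have "(g has_derivative (\<lambda>d. d \<bullet> adjoint g' 1)) (at x)"
    by simp
  with Dfun_eqI[OF this] show ?thesis
    by simp
qed

lemma Dfun_cmult:
  fixes g :: "'a::euclidean_space \<Rightarrow> real"
  assumes "g differentiable (at x)"
  shows "Dfun (\<lambda>y. c * g y) x = c *\<^sub>R Dfun g x"
proof (rule Dfun_eqI)
  show "((\<lambda>y. c * g y) has_derivative (\<lambda>d. d \<bullet> (c *\<^sub>R Dfun g x))) (at x)"
    using has_derivative_mult_right[OF has_derivative_Dfun[OF assms]] by simp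
qed

lemma Dfun_compose_linear:
  fixes g :: "'b::euclidean_space \<Rightarrow> real" and L :: "'a::euclidean_space \<Rightarrow> 'b"
  assumes "linear L" and "g differentiable (at (L x))"
    and "\<And>u. L u \<bullet> Dfun g (L x) = u \<bullet> w"
  shows "Dfun (\<lambda>y. g (L y)) x = w"
proof (rule Dfun_eqI)
  have "((\<lambda>y. g (L y)) has_derivative (\<lambda>u. L u \<bullet> Dfun g (L x))) (at x)"
    using has_derivative_compose[OF linear_imp_has_derivative[OF assms(1)]
        has_derivative_Dfun[OF assms(2)]] .
  then show "((\<lambda>y. g (L y)) has_derivative (\<lambda>u. u \<bullet> w)) (at x)"
    by (simp add: assms(3))
qed

lemma frechet_derivative_Pair:
  fixes G :: "'a::euclidean_space \<times> 'b::euclidean_space \<Rightarrow> real"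
  assumes "G differentiable (at (q, p))"
  shows "frechet_derivative G (at (q, p)) (u, v)
    = u \<bullet> Dfun (\<lambda>q'. G (q', p)) q + v \<bullet> Dfun (\<lambda>p'. G (q, p')) p"
proof -
  let ?G' = "frechet_derivative G (at (q, p))"
  have G': "(G has_derivative ?G') (at (q, p))"
    using assms frechet_derivative_works by blast
  have "((\<lambda>q'. (q', p)) has_derivative (\<lambda>u. (u, 0))) (at q)"
    by (auto intro!: derivative_eq_intros)
  from has_derivative_compose[OF this G']
  have "((\<lambda>q'. G (q', p)) has_derivative (\<lambda>u. ?G' (u, 0))) (at q)" .
  from this has_derivative_Dfun[OF differentiableI[OF this]]
  have partial_q: "(\<lambda>u. ?G' (u, 0)) = (\<lambda>u. u \<bullet> Dfun (\<lambda>q'. G (q', p)) q)"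
    by (rule has_derivative_unique)
  have "((\<lambda>p'. (q, p')) has_derivative (\<lambda>v. (0, v))) (at p)"
    by (auto intro!: derivative_eq_intros)
  from has_derivative_compose[OF this G']
  have "((\<lambda>p'. G (q, p')) has_derivative (\<lambda>v. ?G' (0, v))) (at p)" .
  from this has_derivative_Dfun[OF differentiableI[OF this]]
  have partial_p: "(\<lambda>v. ?G' (0, v)) = (\<lambda>v. v \<bullet> Dfun (\<lambda>p'. G (q, p')) p)"
    by (rule has_derivative_unique)
  have "?G' (u, v) = ?G' (u, 0) + ?G' (0, v)"
    using linear_add[OF has_derivative_linear[OF G'], of "(u, 0)" "(0, v)"] by simp
  then show ?thesis
    using partial_q partial_p by (metis (no_types))
qed

lemma constant_along_integral_curve:
  fixes G :: "'b::real_normed_vector \<Rightarrow> real"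
  assumes "\<And>z. G differentiable (at z)"
    and "\<And>z. frechet_derivative G (at z) (X z) = 0"
    and "\<And>t. (c has_vector_derivative X (c t)) (at t)"
  shows "G (c t1) = G (c t2)"
proof -
  have "DERIV (\<lambda>t. G (c t)) t :> 0" for t
  proof -
    let ?G' = "frechet_derivative G (at (c t))"
    have G': "(G has_derivative ?G') (at (c t))"
      using assms(1) frechet_derivative_works by blast
    have "((\<lambda>t. G (c t)) has_derivative (\<lambda>r. ?G' (r *\<^sub>R X (c t)))) (at t)"
      using has_derivative_compose[OF assms(3)[unfolded has_vector_derivative_def] G'] .
    moreover have "(\<lambda>r. ?G' (r *\<^sub>R X (c t))) = (*) 0"
      using linear_scale[OF has_derivative_linear[OF G']] assms(2) by (simp add: fun_eq_iff)
    ultimately show ?thesis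
      by (simp add: has_field_derivative_def)
  qed
  then show ?thesis
    using DERIV_isconst_all by blast
qed

locale lie_bracket =
  fixes B :: "'a::euclidean_space \<Rightarrow> 'a \<Rightarrow> 'a"
  assumes lie_algebra_B: "lie_algebra B"
begin

lemma bilinear_B: "bilinear B"
  using lie_algebra_B unfolding lie_algebra_def by blast

lemma B_antisym: "B x y = - B y x"
  using lie_algebra_B unfolding lie_algebra_def by blast

lemma B_jacobi: "B x (B y z) + B y (B z x) + B z (B x y) = 0"
  using lie_algebra_B unfolding lie_algebra_def by blast

lemmas B_simps [simp] = bilinear_ladd[OF bilinear_B] bilinear_radd[OF bilinear_B]
  bilinear_lmul[OF bilinear_B] bilinear_rmul[OF bilinear_B]
  bilinear_lneg[OF bilinear_B] bilinear_rneg[OF bilinear_B]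

lemma inner_ad_star_left [simp]: "ad_star B x a \<bullet> y = a \<bullet> B x y"
  unfolding ad_star_def
  using adjoint_works[of "B x" y a] bilinear_B
  by (simp add: bilinear_def inner_commute)

lemma inner_ad_star_right [simp]: "y \<bullet> ad_star B x a = a \<bullet> B x y"
  by (metis inner_ad_star_left inner_commute)

lemma ad_star_eqI: "(\<And>y. a \<bullet> B x y = w \<bullet> y) \<Longrightarrow> ad_star B x a = w"
  using vector_eq_rdot[of "ad_star B x a" w] by simp

lemma bilinear_ad_star: "bilinear (ad_star B)"
  unfolding bilinear_def
  by (auto intro!: linearI ad_star_eqI simp: inner_add_left inner_add_right)

lemma momentum_differentiable: "momentum sg B differentiable (at z)"
proof -
  have "bounded_bilinear (ad_star B)"
    using bilinear_ad_star bilinear_conv_bounded_bilinear by blast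
  from bounded_bilinear.FDERIV[OF this has_derivative_fst[OF has_derivative_ident]
      has_derivative_snd[OF has_derivative_ident]]
  have "((\<lambda>w. (- sg) *\<^sub>R ad_star B (fst w) (snd w)) has_derivative
      (\<lambda>v. (- sg) *\<^sub>R (ad_star B (fst z) (snd v) + ad_star B (fst v) (snd z)))) (at z)"
    by (rule has_derivative_scaleR_right)
  then show ?thesis
    unfolding momentum_def by (rule differentiableI)
qed

lemma linear_ad_star_left: "linear (\<lambda>x. ad_star B x a)"
  using bilinear_ad_star unfolding bilinear_def by blast

lemma linear_ad_star_right: "linear (ad_star B x)"
  using bilinear_ad_star unfolding bilinear_def by blast

lemma Dfun_momentum_fst:
  assumes "g differentiable (at (momentum sg B (q, p)))"
  shows "Dfun (\<lambda>q'. g (momentum sg B (q', p))) q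
    = sg *\<^sub>R ad_star B (Dfun g (momentum sg B (q, p))) p"
  unfolding momentum_def fst_conv snd_conv
proof (rule Dfun_compose_linear[where L = "\<lambda>q'. (- sg) *\<^sub>R ad_star B q' p"])
  show "linear (\<lambda>q'. (- sg) *\<^sub>R ad_star B q' p)"
    using linear_ad_star_left by (rule linear_compose_scale_right)
  show "g differentiable (at ((- sg) *\<^sub>R ad_star B q p))"
    using assms by (simp add: momentum_def)
  show "((- sg) *\<^sub>R ad_star B u p) \<bullet> Dfun g ((- sg) *\<^sub>R ad_star B q p)
      = u \<bullet> (sg *\<^sub>R ad_star B (Dfun g ((- sg) *\<^sub>R ad_star B q p)) p)" for u
    using B_antisym[of u "Dfun g ((- sg) *\<^sub>R ad_star B q p)"] by simp
qed

lemma Dfun_momentum_snd: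
  assumes "g differentiable (at (momentum sg B (q, p)))"
  shows "Dfun (\<lambda>p'. g (momentum sg B (q, p'))) p
    = (- sg) *\<^sub>R B q (Dfun g (momentum sg B (q, p)))"
  unfolding momentum_def fst_conv snd_conv
proof (rule Dfun_compose_linear[where L = "\<lambda>p'. (- sg) *\<^sub>R ad_star B q p'"])
  show "linear (\<lambda>p'. (- sg) *\<^sub>R ad_star B q p')"
    using linear_ad_star_right by (rule linear_compose_scale_right)
  show "g differentiable (at ((- sg) *\<^sub>R ad_star B q p))"
    using assms by (simp add: momentum_def)
qed simp

lemma differentiable_momentum_comp:
  assumes "g differentiable (at (momentum sg B z))"
  shows "(\<lambda>w. g (momentum sg B w)) differentiable (at z)"
  using differentiable_chain_at[OF momentum_differentiable assms] by (simp add: o_def)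

lemma ham_vf_momentum_comp:
  assumes "g differentiable (at (momentum sg B z))"
  shows "ham_vf (\<lambda>w. g (momentum sg B w)) z
    = (sg *\<^sub>R B (Dfun g (momentum sg B z)) (fst z),
       (- sg) *\<^sub>R ad_star B (Dfun g (momentum sg B z)) (snd z))"
proof -
  obtain q p where z: "z = (q, p)"
    by fastforce
  show ?thesis
    using assms B_antisym[of q "Dfun g (momentum sg B z)"]
    by (simp add: z ham_vf_def Dfun_momentum_fst Dfun_momentum_snd)
qed

lemma frechet_derivative_momentum_comp_ham_vf:
  assumes "g differentiable (at (momentum sg B z))" and "k differentiable (at (momentum sg B z))"
  shows "frechet_derivative (\<lambda>w. g (momentum sg B w)) (at z) (ham_vf (\<lambda>w. k (momentum sg B w)) z)
    = lie_poisson sg B g k (momentum sg B z)"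
proof -
  obtain q p where z: "z = (q, p)"
    by fastforce
  define a b where "a = Dfun g (momentum sg B z)" and "b = Dfun k (momentum sg B z)"
  have "frechet_derivative (\<lambda>w. g (momentum sg B w)) (at z) (ham_vf (\<lambda>w. k (momentum sg B w)) z)
      = (sg *\<^sub>R ad_star B a p) \<bullet> (sg *\<^sub>R B b q) + ((- sg) *\<^sub>R B q a) \<bullet> ((- sg) *\<^sub>R ad_star B b p)"
    using assms differentiable_momentum_comp[OF assms(1)]
    by (simp add: z a_def b_def frechet_derivative_Pair ham_vf_momentum_comp
        Dfun_momentum_fst Dfun_momentum_snd)
  also have "\<dots> = sg * sg * (p \<bullet> (B a (B b q) + B b (B q a)))"
    by (simp add: inner_add_right algebra_simps)
  also have "\<dots> = - sg * sg * (p \<bullet> B q (B a b))"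
  proof -
    have "p \<bullet> (B a (B b q) + B b (B q a)) = - (p \<bullet> B q (B a b))"
      using arg_cong[OF B_jacobi[of a b q], of "(\<bullet>) p"]
      by (simp add: inner_add_right eq_neg_iff_add_eq_0)
    then show ?thesis
      by simp
  qed
  also have "\<dots> = lie_poisson sg B g k (momentum sg B z)"
    by (simp add: lie_poisson_def momentum_def z a_def b_def)
  finally show ?thesis .
qed

lemma lie_poisson_antisym: "lie_poisson sg B g k mu = - lie_poisson sg B k g mu"
  unfolding lie_poisson_def using B_antisym[of "Dfun g mu" "Dfun k mu"] by simp

lemma lie_poisson_cmult_left:
  assumes "g differentiable (at mu)"
  shows "lie_poisson sg B (\<lambda>x. c * g x) k mu = c * lie_poisson sg B g k mu"
  using assms by (simp add: lie_poisson_def Dfun_cmult)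

end

theorem proposition4p4:
  fixes B :: "'a::euclidean_space \<Rightarrow> 'a \<Rightarrow> 'a" and sg :: real and f h :: "'a \<Rightarrow> real"
  assumes "lie_algebra B"
    and "sg = 1 \<or> sg = -1"
    and "\<forall>mu. f differentiable (at mu)"
    and "casimir sg B f"
    and "\<forall>mu. h differentiable (at mu)"
  shows "(\<forall>s z. ham_vf (\<lambda>w. s * f (momentum sg B w)) z = act_vf sg B f s z)
       \<and> (\<forall>s z. frechet_derivative (\<lambda>w. h (momentum sg B w)) (at z) (act_vf sg B f s z) = 0)
       \<and> (\<forall>c :: real \<Rightarrow> 'a \<times> 'a.
            (\<forall>t. (c has_vector_derivative ham_vf (\<lambda>w. h (momentum sg B w)) (c t)) (at t)) \<longrightarrow>
            (\<forall>t1 t2. f (momentum sg B (c t1)) = f (momentum sg B (c t2))))"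
proof -
  interpret lie_bracket B
    by (rule lie_bracket.intro) fact
  have casimir_f: "lie_poisson sg B f h mu = 0" for mu
    using assms(4,5) unfolding casimir_def by blast
  have ham_vf_sF: "ham_vf (\<lambda>w. s * f (momentum sg B w)) z = act_vf sg B f s z" for s z
    using ham_vf_momentum_comp[of "\<lambda>x. s * f x"] assms(3)
    by (simp add: Dfun_cmult act_vf_def gam_def)
  moreover have "frechet_derivative (\<lambda>w. h (momentum sg B w)) (at z) (act_vf sg B f s z) = 0"
    for s z
  proof -
    have "frechet_derivative (\<lambda>w. h (momentum sg B w)) (at z) (act_vf sg B f s z)
        = lie_poisson sg B h (\<lambda>x. s * f x) (momentum sg B z)"
      using frechet_derivative_momentum_comp_ham_vf[of h sg z "\<lambda>x. s * f x"] assms(3,5)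
      by (simp add: ham_vf_sF)
    also have "\<dots> = - s * lie_poisson sg B f h (momentum sg B z)"
      using assms(3) by (simp add: lie_poisson_antisym[of _ h "\<lambda>x. s * f x"] lie_poisson_cmult_left)
    finally show ?thesis
      by (simp add: casimir_f)
  qed
  moreover have "f (momentum sg B (c t1)) = f (momentum sg B (c t2))"
    if "\<forall>t. (c has_vector_derivative ham_vf (\<lambda>w. h (momentum sg B w)) (c t)) (at t)"
    for c :: "real \<Rightarrow> 'a \<times> 'a" and t1 t2
    using that assms(3,5)
    by (intro constant_along_integral_curve[where X = "ham_vf (\<lambda>w. h (momentum sg B w))"])
      (simp_all add: differentiable_momentum_comp frechet_derivative_momentum_comp_ham_vf casimir_f)
  ultimately show ?thesis
    by blast
qed

end
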